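(* Let $p>3$ be a prime and $t\in\mathbb Z_p$. Then $$P_{\frac{p-1}2}(t)\equiv\sum_{k=0}^{\frac{p-1}2}\binom{2k}k^2\Big(\frac{1-t}{32}\Big)^k\equiv-\Big(\frac{-6}p\Big)\sum_{x=0}^{p-1}\Big(\frac{x^3-3(t^2+3)x+2t(t^2-9)}p\Big)\pmod p.$$
   Context: $\mathbb Z_p$ denotes the set of rational numbers whose denominator (in lowest terms) is prime to $p$; congruences are in this ring. For $a\in\mathbb Z_p$, $\big(\frac ap\big)$ is the Legendre symbol of the residue of $a$ modulo $p$ (equal to $0$ if $p\mid a$). $P_n(x)$ is the $n$-th Legendre polynomial, defined by $\frac1{\sqrt{1-2xt+t^2}}=\sum_{n\ge0}P_n(x)t^n$, equivalently $P_n(x)=\frac1{2^n}\sum_{k=0}^{[n/2]}\frac{(-1)^k(2n-2k)!}{k!(n-k)!(n-2k)!}x^{n-2k}$. *)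

theory Defs
  imports "HOL-Number_Theory.Number_Theory"
begin

text \<open>Z_p: rationals whose denominator (in lowest terms) is prime to p.\<close>
definition in_Zp :: "int \<Rightarrow> rat \<Rightarrow> bool" where
  "in_Zp p q \<longleftrightarrow> coprime (snd (quotient_of q)) p"

definition cong_Zp :: "rat \<Rightarrow> rat \<Rightarrow> int \<Rightarrow> bool" where
  "cong_Zp a b p \<longleftrightarrow> in_Zp p ((a - b) / of_int p)"

definition res_Zp :: "int \<Rightarrow> rat \<Rightarrow> int" where
  "res_Zp p q = (THE r. 0 \<le> r \<and> r < p \<and>
       [snd (quotient_of q) * r = fst (quotient_of q)] (mod p))"

definition Legendre_Zp :: "rat \<Rightarrow> int \<Rightarrow> int" where
  "Legendre_Zp a p = Legendre (res_Zp p a) p"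

definition LegendreP :: "nat \<Rightarrow> rat \<Rightarrow> rat" where
  "LegendreP n x = (1 / 2 ^ n) * (\<Sum>k = 0..n div 2.
     (-1) ^ k * fact (2*n - 2*k) / (fact k * fact (n - k) * fact (n - 2*k)) * x ^ (n - 2*k))"

end

theory Submission
  imports Defs "HOL-Computational_Algebra.Polynomial"
begin

text \<open>
  Write p = 2n + 1. Rodrigues' formula gives P_n(t) = sum_k C(n,k) C(n+k,k) ((t-1)/2)^k, and
  since n = -1/2 mod p the binomial coefficients reduce to C(n,k) = C(-1/2,k) = (-1/4)^k C(2k,k)
  and C(n+k,k) = C(2k,k) / 4^k; this gives the first congruence. For the second, the cubic
  factors as (x - t - 3)(x - t + 3)(x + 2t). By Euler's criterion the character sum is
  sum_x f(x)^n mod p; after the shift x -> x + t - 3 and expansion only the monomials of degree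
  p - 1 survive the summation over x, leaving -(-6)^n sum_k C(n,k)^2 ((1-t)/2)^k.
  Fermat's 36^n = 1 and C(n,k)^2 = C(2k,k)^2 / 16^k mod p finish the proof.
\<close>

section \<open>The ring \<open>\<int>\<^sub>p\<close>\<close>

lemma in_Zp_iff_fraction:
  "in_Zp p q \<longleftrightarrow> (\<exists>a b. b \<noteq> 0 \<and> coprime b p \<and> q = of_int a / of_int b)"
proof
  assume "in_Zp p q"
  obtain a b where qo: "quotient_of q = (a, b)" by fastforce
  then show "\<exists>a b. b \<noteq> 0 \<and> coprime b p \<and> q = of_int a / of_int b"
    using \<open>in_Zp p q\<close> quotient_of_denom_pos[OF qo] quotient_of_div[OF qo]
    by (intro exI[of _ a] exI[of _ b]) (simp add: in_Zp_def)
next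
  assume "\<exists>a b. b \<noteq> 0 \<and> coprime b p \<and> q = of_int a / of_int b"
  then obtain a b where b: "b \<noteq> 0" "coprime b p" "q = of_int a / of_int b" by auto
  obtain a' b' where qo: "quotient_of q = (a', b')" by fastforce
  have "b' > 0" "q = of_int a' / of_int b'" "coprime a' b'"
    using quotient_of_denom_pos[OF qo] quotient_of_div[OF qo] quotient_of_coprime[OF qo] by auto
  with b have "of_int (a * b') = (of_int (a' * b) :: rat)"
    by (simp add: field_simps)
  then have "a * b' = a' * b"
    by (simp only: of_int_eq_iff)
  then have "b' dvd b"
    using \<open>coprime a' b'\<close> by (metis coprime_commute coprime_dvd_mult_right_iff dvd_triv_right)
  then show "in_Zp p q"
    using b(2) qo by (simp add: in_Zp_def coprime_imp_coprime dvd_trans)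
qed

lemma in_Zp_fraction: "b \<noteq> 0 \<Longrightarrow> coprime b p \<Longrightarrow> in_Zp p (of_int a / of_int b)"
  using in_Zp_iff_fraction by blast

lemma in_Zp_of_int [simp]: "in_Zp p (of_int a)"
  using in_Zp_fraction[of 1 p a] by simp

lemma in_Zp_of_nat [simp]: "in_Zp p (of_nat a)"
  using in_Zp_of_int[of p "int a"] by simp

lemma in_Zp_numeral [simp]: "in_Zp p (numeral a)"
  using in_Zp_of_int[of p "numeral a"] by simp

lemma in_Zp_0 [simp]: "in_Zp p 0" and in_Zp_1 [simp]: "in_Zp p 1"
  using in_Zp_of_int[of p 0] in_Zp_of_int[of p 1] by simp_all

lemma in_Zp_add [simp]:
  assumes "in_Zp p x" "in_Zp p y" shows "in_Zp p (x + y)"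
proof -
  obtain a b c d where "b \<noteq> 0" "coprime b p" "x = of_int a / of_int b"
    and "d \<noteq> 0" "coprime d p" "y = of_int c / of_int d"
    using assms in_Zp_iff_fraction by meson
  moreover from calculation have "x + y = of_int (a * d + c * b) / of_int (b * d)"
    by (simp add: field_simps)
  ultimately show ?thesis
    by (metis in_Zp_fraction coprime_mult_left_iff mult_eq_0_iff)
qed

lemma in_Zp_mult [simp]:
  assumes "in_Zp p x" "in_Zp p y" shows "in_Zp p (x * y)"
proof -
  obtain a b c d where "b \<noteq> 0" "coprime b p" "x = of_int a / of_int b"
    and "d \<noteq> 0" "coprime d p" "y = of_int c / of_int d"
    using assms in_Zp_iff_fraction by meson
  moreover from calculation have "x * y = of_int (a * c) / of_int (b * d)"
    by simp
  ultimately show ?thesis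
    by (metis in_Zp_fraction coprime_mult_left_iff mult_eq_0_iff)
qed

lemma in_Zp_uminus [simp]: "in_Zp p x \<Longrightarrow> in_Zp p (- x)"
  using in_Zp_mult[OF in_Zp_of_int[of p "- 1"], of x] by simp

lemma in_Zp_diff [simp]: "in_Zp p x \<Longrightarrow> in_Zp p y \<Longrightarrow> in_Zp p (x - y)"
  using in_Zp_add[of p x "- y"] by simp

lemma in_Zp_power [simp]: "in_Zp p x \<Longrightarrow> in_Zp p (x ^ k)"
  by (induction k) auto

lemma in_Zp_sum [simp]: "(\<And>i. i \<in> A \<Longrightarrow> in_Zp p (f i)) \<Longrightarrow> in_Zp p (sum f A)"
  by (induction A rule: infinite_finite_induct) auto

lemma in_Zp_prod [simp]: "(\<And>i. i \<in> A \<Longrightarrow> in_Zp p (f i)) \<Longrightarrow> in_Zp p (prod f A)"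
  by (induction A rule: infinite_finite_induct) auto

lemma in_Zp_inverse: "coprime b p \<Longrightarrow> in_Zp p (1 / of_int b)"
  using in_Zp_fraction[of b p 1] by (cases "b = 0") auto

lemma in_Zp_inverse_fact:
  assumes "prime p" "int k < p" shows "in_Zp p (1 / fact k)"
proof -
  define q where "q = nat p"
  have q: "p = int q" "prime q"
    using assms(1) by (auto simp: q_def prime_ge_0_int)
  have "\<not> q dvd fact k"
    using q assms(2) by (simp add: prime_dvd_fact_iff)
  then have "coprime (fact k) q"
    using q(2) by (simp add: prime_imp_coprime coprime_commute)
  then have "coprime (int (fact k)) p"
    unfolding q(1) coprime_int_iff .
  then show ?thesis
    using in_Zp_inverse[of "int (fact k)" p] by simp
qed

lemma in_Zp_gbinomial:
  assumes "prime p" "in_Zp p a" "int k < p"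
  shows "in_Zp p (a gchoose k)"
proof -
  have "a gchoose k = (-1) ^ k * pochhammer (- a) k * (1 / fact k)"
    by (simp add: gbinomial_pochhammer)
  moreover have "in_Zp p (pochhammer (- a) k)"
    using assms by (simp add: pochhammer_prod)
  ultimately show ?thesis
    using in_Zp_inverse_fact[OF assms(1,3)] by (metis in_Zp_mult in_Zp_power in_Zp_uminus in_Zp_1)
qed

text \<open>Modulo \<open>0\<close> every congruence holds, since \<open>x / 0 = 0\<close>; hence the assumption.\<close>

locale Zp =
  fixes p :: int
  assumes nonzero: "p \<noteq> 0"
begin

lemma cong_Zp_iff: "cong_Zp x y p \<longleftrightarrow> (\<exists>c. in_Zp p c \<and> x - y = of_int p * c)"
proof
  assume "\<exists>c. in_Zp p c \<and> x - y = of_int p * c"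
  then obtain c where "in_Zp p c" "x - y = of_int p * c" by blast
  then show "cong_Zp x y p" using nonzero by (simp add: cong_Zp_def)
qed (use nonzero in \<open>auto simp: cong_Zp_def intro!: exI[of _ "(x - y) / of_int p"]\<close>)

lemma cong_ZpI: "in_Zp p c \<Longrightarrow> x - y = of_int p * c \<Longrightarrow> cong_Zp x y p"
  using cong_Zp_iff by blast

lemma cong_ZpE:
  assumes "cong_Zp x y p" obtains c where "in_Zp p c" "x - y = of_int p * c"
  using assms cong_Zp_iff by blast

lemma cong_Zp_refl [simp]: "cong_Zp x x p"
  by (rule cong_ZpI[of 0]) auto

lemma cong_Zp_sym: "cong_Zp x y p \<Longrightarrow> cong_Zp y x p"
proof (elim cong_ZpE)
  fix c assume "in_Zp p c" "x - y = of_int p * c"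
  then show ?thesis by (intro cong_ZpI[of "- c"]) (simp_all add: algebra_simps)
qed

lemma cong_Zp_trans [trans]: "cong_Zp x y p \<Longrightarrow> cong_Zp y z p \<Longrightarrow> cong_Zp x z p"
proof (elim cong_ZpE)
  fix c d assume "in_Zp p c" "x - y = of_int p * c" "in_Zp p d" "y - z = of_int p * d"
  then show ?thesis by (intro cong_ZpI[of "c + d"]) (simp_all add: algebra_simps)
qed

lemma cong_Zp_add: "cong_Zp x x' p \<Longrightarrow> cong_Zp y y' p \<Longrightarrow> cong_Zp (x + y) (x' + y') p"
proof (elim cong_ZpE)
  fix c d assume "in_Zp p c" "x - x' = of_int p * c" "in_Zp p d" "y - y' = of_int p * d"
  then show ?thesis by (intro cong_ZpI[of "c + d"]) (simp_all add: algebra_simps)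
qed

lemma cong_Zp_uminus: "cong_Zp x x' p \<Longrightarrow> cong_Zp (- x) (- x') p"
proof (elim cong_ZpE)
  fix c assume "in_Zp p c" "x - x' = of_int p * c"
  then show ?thesis by (intro cong_ZpI[of "- c"]) (simp_all add: algebra_simps)
qed

lemma cong_Zp_diff: "cong_Zp x x' p \<Longrightarrow> cong_Zp y y' p \<Longrightarrow> cong_Zp (x - y) (x' - y') p"
  using cong_Zp_add[of x x' "- y" "- y'"] cong_Zp_uminus[of y y'] by simp

lemma in_Zp_cong: "cong_Zp x y p \<Longrightarrow> in_Zp p y \<Longrightarrow> in_Zp p x"
proof (elim cong_ZpE)
  fix c assume "in_Zp p y" "in_Zp p c" "x - y = of_int p * c"
  then have "x = y + of_int p * c" by (simp add: algebra_simps)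
  then show "in_Zp p x" using \<open>in_Zp p y\<close> \<open>in_Zp p c\<close> by simp
qed

lemma cong_Zp_mult:
  assumes "in_Zp p x" "in_Zp p y" "cong_Zp x x' p" "cong_Zp y y' p"
  shows "cong_Zp (x * y) (x' * y') p"
proof -
  obtain c d where c: "in_Zp p c" "x - x' = of_int p * c" and d: "in_Zp p d" "y - y' = of_int p * d"
    using assms(3,4) by (meson cong_ZpE)
  have "in_Zp p y'" using assms(2,4) cong_Zp_sym in_Zp_cong by blast
  have "x * y - x' * y' = x * (y - y') + y' * (x - x')" by (simp add: algebra_simps)
  also have "\<dots> = of_int p * (x * d + y' * c)" unfolding c(2) d(2) by (simp add: algebra_simps)
  finally show ?thesis
    using assms(1) c(1) d(1) \<open>in_Zp p y'\<close> by (intro cong_ZpI[of "x * d + y' * c"]) simp_all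
qed

lemma cong_Zp_power: "in_Zp p x \<Longrightarrow> cong_Zp x x' p \<Longrightarrow> cong_Zp (x ^ k) (x' ^ k) p"
  by (induction k) (simp_all add: cong_Zp_mult)

lemma cong_Zp_sum: "(\<And>i. i \<in> A \<Longrightarrow> cong_Zp (f i) (g i) p) \<Longrightarrow> cong_Zp (sum f A) (sum g A) p"
  by (induction A rule: infinite_finite_induct) (auto intro: cong_Zp_add)

lemma cong_Zp_prod:
  "(\<And>i. i \<in> A \<Longrightarrow> in_Zp p (f i)) \<Longrightarrow> (\<And>i. i \<in> A \<Longrightarrow> cong_Zp (f i) (g i) p) \<Longrightarrow>
    cong_Zp (prod f A) (prod g A) p"
  by (induction A rule: infinite_finite_induct) (auto intro: cong_Zp_mult)

lemma cong_Zp_of_int: "[a = b] (mod p) \<Longrightarrow> cong_Zp (of_int a) (of_int b) p"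
proof -
  assume "[a = b] (mod p)"
  then obtain k where "a - b = p * k" by (metis cong_iff_dvd_diff dvd_def)
  then show ?thesis by (intro cong_ZpI[of "of_int k"]) (simp_all flip: of_int_diff of_int_mult)
qed

lemma cong_Zp_gbinomial:
  assumes "prime p" "in_Zp p a" "cong_Zp a b p" "int k < p"
  shows "cong_Zp (a gchoose k) (b gchoose k) p"
proof -
  have "cong_Zp (pochhammer (- a) k) (pochhammer (- b) k) p"
    unfolding pochhammer_prod
    by (intro cong_Zp_prod cong_Zp_add cong_Zp_uminus assms cong_Zp_refl) (use assms in simp)
  then have "cong_Zp ((- 1) ^ k * pochhammer (- a) k * (1 / fact k))
      ((- 1) ^ k * pochhammer (- b) k * (1 / fact k)) p"
    using assms in_Zp_inverse_fact[OF assms(1,4)]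
    by (intro cong_Zp_mult cong_Zp_refl) (auto simp: pochhammer_prod)
  then show ?thesis
    by (simp add: gbinomial_pochhammer)
qed

end

lemma res_Zp_spec:
  assumes "p > 0" "in_Zp p q"
  shows "0 \<le> res_Zp p q \<and> res_Zp p q < p \<and>
    [snd (quotient_of q) * res_Zp p q = fst (quotient_of q)] (mod p)"
proof -
  obtain a b where qo: "quotient_of q = (a, b)" by fastforce
  have "coprime b p" using assms(2) qo by (simp add: in_Zp_def)
  then obtain b' where b': "[b * b' = 1] (mod p)" using cong_solve_coprime_int by blast
  define P where "P r \<longleftrightarrow> 0 \<le> r \<and> r < p \<and> [b * r = a] (mod p)" for r
  have "[b * ((a * b') mod p) = b * (a * b')] (mod p)"
    by (intro cong_scalar_left) (simp add: cong_def)
  also have "b * (a * b') = a * (b * b')" by (simp add: algebra_simps)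
  also have "[a * (b * b') = a * 1] (mod p)" by (intro cong_scalar_left b')
  finally have ex: "P ((a * b') mod p)" using assms(1) by (simp add: P_def)
  have uniq: "r = r'" if "P r" "P r'" for r r'
  proof -
    have "[b * r = b * r'] (mod p)" using that unfolding P_def by (meson cong_sym cong_trans)
    then have "[r = r'] (mod p)" using \<open>coprime b p\<close> cong_mult_lcancel by blast
    then show ?thesis using that cong_less_imp_eq_int unfolding P_def by blast
  qed
  have "P (THE r. P r)" by (rule theI[of P, OF ex]) (use uniq ex in blast)
  then show ?thesis unfolding res_Zp_def qo fst_conv snd_conv P_def by simp
qed

section \<open>Power sums and a cubic character sum modulo \<open>p\<close>\<close>

lemma sum_residues_affine_cong:
  fixes p c d :: int and F :: "int \<Rightarrow> int"
  assumes "p > 0" "coprime c p"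
    and F: "\<And>x y. [x = y] (mod p) \<Longrightarrow> [F x = F y] (mod p)"
  shows "[(\<Sum>x = 0..p - 1. F (c * x + d)) = (\<Sum>x = 0..p - 1. F x)] (mod p)"
proof -
  define g where "g x = (c * x + d) mod p" for x
  have "inj_on g {0..p - 1}"
  proof
    fix x y assume "x \<in> {0..p - 1}" "y \<in> {0..p - 1}" "g x = g y"
    then have "[c * x = c * y] (mod p)"
      by (simp add: g_def cong_def[symmetric] cong_add_rcancel)
    then have "[x = y] (mod p)"
      using assms(2) by (simp add: cong_mult_lcancel)
    then show "x = y"
      using \<open>x \<in> _\<close> \<open>y \<in> _\<close> cong_less_imp_eq_int by auto
  qed
  moreover have "g ` {0..p - 1} \<subseteq> {0..p - 1}"
    using assms(1) by (auto simp: g_def)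
  ultimately have perm: "g ` {0..p - 1} = {0..p - 1}"
    by (simp add: endo_inj_surj)
  have "[(\<Sum>x = 0..p - 1. F (c * x + d)) = (\<Sum>x = 0..p - 1. F (g x))] (mod p)"
    by (intro cong_sum F) (simp add: g_def cong_def)
  also have "(\<Sum>x = 0..p - 1. F (g x)) = (\<Sum>x = 0..p - 1. F x)"
    using sum.reindex[OF \<open>inj_on g _\<close>, of F] perm by simp
  finally show ?thesis .
qed

lemma fermat_theorem_int:
  fixes p a :: int
  assumes "prime p" "coprime a p"
  shows "[a ^ nat (p - 1) = 1] (mod p)"
proof -
  have "residues p"
    using assms(1) prime_gt_1_int by (simp add: residues_def)
  moreover have "totient (nat p) = nat (p - 1)"
    using assms(1) by (simp add: totient_prime prime_nat_iff_prime nat_diff_distrib)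
  ultimately show ?thesis
    using residues.euler_theorem[of p a] assms(2) by simp
qed

lemma power_sum_residues_eq_minus_one:
  fixes p :: int
  assumes "prime p" "e \<ge> 1" "nat (p - 1) dvd e"
  shows "[(\<Sum>x = 0..p - 1. x ^ e) = -1] (mod p)"
proof -
  have p: "p > 1" using assms(1) prime_gt_1_int by blast
  obtain m where m: "e = nat (p - 1) * m" using assms(3) by blast
  have "[(\<Sum>x = 1..p - 1. x ^ e) = (\<Sum>x = 1..p - 1. 1)] (mod p)"
  proof (intro cong_sum)
    fix x assume "x \<in> {1..p - 1}"
    then have "coprime x p"
      using assms(1) by (auto simp: prime_imp_coprime coprime_commute zdvd_not_zless)
    then have "[(x ^ nat (p - 1)) ^ m = 1 ^ m] (mod p)"
      by (intro cong_pow fermat_theorem_int assms(1))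
    then show "[x ^ e = 1] (mod p)" by (simp add: m power_mult)
  qed
  moreover have "{0..p - 1} = insert 0 {1..p - 1}" using p by auto
  ultimately have "[(\<Sum>x = 0..p - 1. x ^ e) = p - 1] (mod p)"
    using p assms(2) by (simp add: power_0_left)
  also have "[p - 1 = -1] (mod p)" by (simp add: cong_iff_dvd_diff)
  finally show ?thesis .
qed

lemma power_sum_residues_eq_zero:
  fixes p :: int
  assumes "prime p" "\<not> nat (p - 1) dvd e"
  shows "[(\<Sum>x = 0..p - 1. x ^ e) = 0] (mod p)"
proof -
  define q where "q = nat p"
  have q: "p = int q" "prime q" using assms(1) by (auto simp: q_def prime_ge_0_int)
  obtain g where "residue_primroot q g"
    using prime_primitive_root_exists[of q] q(2) prime_gt_1_nat by blast
  then have "ord q g = nat (p - 1)" "coprime q g"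
    using q by (auto simp: residue_primroot_def totient_prime nat_diff_distrib)
  then have "\<not> [int g ^ e = 1] (mod p)"
    using assms(2) q(1) ord_divides[of g e q] by (simp flip: cong_int_iff)
  moreover have "coprime (int g) p"
    using \<open>coprime q g\<close> q(1) by (simp add: coprime_commute)
  define S where "S = (\<Sum>x = 0..p - 1. x ^ e)"
  have "[(\<Sum>x = 0..p - 1. (int g * x + 0) ^ e) = S] (mod p)"
    unfolding S_def using q \<open>coprime (int g) p\<close>
    by (intro sum_residues_affine_cong cong_pow) (auto simp: prime_gt_0_nat)
  then have "[int g ^ e * S = 1 * S] (mod p)"
    by (simp add: S_def power_mult_distrib sum_distrib_left)
  then have "p dvd (int g ^ e - 1) * S"
    by (simp add: cong_iff_dvd_diff algebra_simps)
  with \<open>\<not> [int g ^ e = 1] (mod p)\<close> have "p dvd S"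
    using assms(1) prime_dvd_mult_iff by (auto simp: cong_iff_dvd_diff)
  then show ?thesis unfolding S_def by (simp add: cong_0_iff)
qed

lemma double_dvd_iff_sum_eq:
  fixes n i j :: nat
  assumes "n \<ge> 1" "i \<le> n" "j \<le> n"
  shows "2 * n dvd n + i + j \<longleftrightarrow> j = n - i"
proof
  assume "2 * n dvd n + i + j"
  then obtain k where k: "n + i + j = 2 * n * k" by blast
  consider "k = 0" | "k = 1" | "k \<ge> 2" by linarith
  then show "j = n - i"
  proof cases
    case 3
    then have "2 * n * 2 \<le> 2 * n * k" by simp
    with k assms show ?thesis by linarith
  qed (use k assms in auto)
qed (use assms in \<open>auto simp: mult_2\<close>)

lemma sum_power_product_linear:
  fixes p A B :: int and n :: nat
  assumes "prime p" "p = 2 * int n + 1"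
  shows "[(\<Sum>x = 0..p - 1. (x * (x + A) * (x + B)) ^ n) =
          - (\<Sum>i = 0..n. int (n choose i) ^ 2 * A ^ (n - i) * B ^ i)] (mod p)"
proof -
  have "n \<ge> 1" using prime_ge_2_int[OF assms(1)] assms(2) by linarith
  define c where "c i j = int (n choose i) * int (n choose j) * A ^ (n - i) * B ^ (n - j)" for i j
  have expand: "(x * (x + A) * (x + B)) ^ n = (\<Sum>i\<le>n. \<Sum>j\<le>n. c i j * x ^ (n + i + j))" for x
  proof -
    have "(x * (x + A) * (x + B)) ^ n = x ^ n * (x + A) ^ n * (x + B) ^ n"
      by (simp add: power_mult_distrib)
    also have "\<dots> = x ^ n * (\<Sum>i\<le>n. int (n choose i) * x ^ i * A ^ (n - i))
        * (\<Sum>j\<le>n. int (n choose j) * x ^ j * B ^ (n - j))"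
      by (simp only: binomial_ring)
    also have "\<dots> = (\<Sum>i\<le>n. x ^ n * (int (n choose i) * x ^ i * A ^ (n - i)))
        * (\<Sum>j\<le>n. int (n choose j) * x ^ j * B ^ (n - j))"
      by (simp add: sum_distrib_left)
    also have "\<dots> = (\<Sum>i\<le>n. \<Sum>j\<le>n. c i j * x ^ (n + i + j))"
      unfolding sum_product
      by (intro sum.cong refl) (simp add: c_def power_add algebra_simps)
    finally show ?thesis .
  qed
  have power_sum: "[(\<Sum>x = 0..p - 1. x ^ (n + i + j)) = (if j = n - i then -1 else 0)] (mod p)"
    if "i \<le> n" "j \<le> n" for i j
    using double_dvd_iff_sum_eq[OF \<open>n \<ge> 1\<close> that] assms \<open>n \<ge> 1\<close>
      power_sum_residues_eq_minus_one[OF assms(1)] power_sum_residues_eq_zero[OF assms(1)]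
    by (auto simp: nat_mult_distrib)
  have "(\<Sum>x = 0..p - 1. (x * (x + A) * (x + B)) ^ n) =
      (\<Sum>i\<le>n. \<Sum>x = 0..p - 1. \<Sum>j\<le>n. c i j * x ^ (n + i + j))"
    unfolding expand by (rule sum.swap)
  also have "\<dots> = (\<Sum>i\<le>n. \<Sum>j\<le>n. c i j * (\<Sum>x = 0..p - 1. x ^ (n + i + j)))"
    unfolding sum_distrib_left by (intro sum.cong refl sum.swap)
  also have "[\<dots> = (\<Sum>i\<le>n. \<Sum>j\<le>n. c i j * (if j = n - i then -1 else 0))] (mod p)"
    by (intro cong_sum cong_scalar_left power_sum) auto
  also have "(\<Sum>i\<le>n. \<Sum>j\<le>n. c i j * (if j = n - i then -1 else 0)) = (\<Sum>i\<le>n. - c i (n - i))"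
    by (simp add: if_distrib sum.delta cong: if_cong)
  also have "\<dots> = - (\<Sum>i = 0..n. int (n choose i) ^ 2 * A ^ (n - i) * B ^ i)"
    by (auto simp: sum_negf c_def atLeast0AtMost power2_eq_square binomial_symmetric[symmetric]
        intro!: sum.cong)
  finally show ?thesis .
qed

lemma sum_split_cubic_power:
  fixes p a b c :: int and n :: nat
  assumes "prime p" "p = 2 * int n + 1"
  shows "[(\<Sum>x = 0..p - 1. ((x - a) * (x - b) * (x - c)) ^ n) =
          - (\<Sum>i = 0..n. int (n choose i) ^ 2 * (b - a) ^ (n - i) * (b - c) ^ i)] (mod p)"
proof -
  define F where "F x = ((x - a) * (x - b) * (x - c)) ^ n" for x
  have "[F x = F y] (mod p)" if "[x = y] (mod p)" for x y
    unfolding F_def by (intro cong_pow cong_mult cong_diff that cong_refl)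
  then have "[(\<Sum>x = 0..p - 1. F (1 * x + b)) = (\<Sum>x = 0..p - 1. F x)] (mod p)"
    using assms(1) prime_gt_0_int by (intro sum_residues_affine_cong[of p 1 F b]) auto
  then have "[(\<Sum>x = 0..p - 1. F x) = (\<Sum>x = 0..p - 1. F (1 * x + b))] (mod p)"
    by (rule cong_sym)
  also have "(\<Sum>x = 0..p - 1. F (1 * x + b)) = (\<Sum>x = 0..p - 1. (x * (x + (b - a)) * (x + (b - c))) ^ n)"
  proof (intro sum.cong refl)
    fix x
    have "(1 * x + b - a) * (1 * x + b - b) * (1 * x + b - c) = x * (x + (b - a)) * (x + (b - c))"
      by (simp add: algebra_simps)
    then show "F (1 * x + b) = (x * (x + (b - a)) * (x + (b - c))) ^ n"
      unfolding F_def by (simp only:)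
  qed
  also have "[\<dots> = - (\<Sum>i = 0..n. int (n choose i) ^ 2 * (b - a) ^ (n - i) * (b - c) ^ i)] (mod p)"
    by (rule sum_power_product_linear[OF assms])
  finally show ?thesis unfolding F_def .
qed

section \<open>Legendre polynomials\<close>

lemma higher_pderiv_monom_fact:
  "(pderiv ^^ m) (monom (c :: 'a :: field_char_0) N) =
     (if m \<le> N then monom (c * fact N / fact (N - m)) (N - m) else 0)"
proof (induction m)
  case (Suc m)
  show ?case
  proof (cases "Suc m \<le> N")
    case True
    define d where "d = (of_nat (N - m) :: 'a)"
    have "d \<noteq> 0" using True by (simp add: d_def)
    have "N - m = Suc (N - Suc m)" using True by simp
    then have "fact (N - m) = d * fact (N - Suc m)"
      unfolding d_def by (metis fact_Suc)
    then have "d * (c * fact N / fact (N - m)) = c * fact N / fact (N - Suc m)"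
      using \<open>d \<noteq> 0\<close> by (simp add: field_simps)
    then have "of_nat (N - m) * (c * fact N / fact (N - m)) = (c * fact N / fact (N - Suc m) :: 'a)"
      unfolding d_def .
    with True Suc.IH show ?thesis by (simp add: pderiv_monom)
  qed (use Suc.IH in \<open>auto simp: pderiv_monom\<close>)
qed simp

lemma higher_pderiv_pcompose_linear:
  "(pderiv ^^ m) (p \<circ>\<^sub>p [:a, c:]) = smult (c ^ m) ((pderiv ^^ m) p \<circ>\<^sub>p [:a, c:])"
  for p :: "'a :: field_char_0 poly"
  by (induction m) (simp_all add: pderiv_smult pderiv_pcompose pderiv_pCons mult.commute)

lemma poly_higher_pderiv_Rodrigues:
  "poly ((pderiv ^^ n) ([:-1, 0, 1:] ^ n)) t = fact n * 2 ^ n * LegendreP n t"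
proof -
  define c :: "nat \<Rightarrow> rat" where "c k = of_nat (n choose k) * (-1) ^ k" for k
  have expand: "[:-1, 0, 1:] ^ n = (\<Sum>k\<le>n. monom (c k) (2 * (n - k)))"
  proof (rule poly_eq_poly_eq_iff[THEN iffD1], rule ext)
    fix x :: rat
    have "poly ([:-1, 0, 1:] ^ n) x = (-1 + x\<^sup>2) ^ n"
      by (simp add: poly_power power2_eq_square)
    also have "\<dots> = (\<Sum>k\<le>n. of_nat (n choose k) * (-1) ^ k * (x\<^sup>2) ^ (n - k))"
      by (rule binomial_ring)
    finally show "poly ([:-1, 0, 1:] ^ n) x = poly (\<Sum>k\<le>n. monom (c k) (2 * (n - k))) x"
      by (simp add: poly_sum poly_monom c_def power_mult)
  qed
  have "poly ((pderiv ^^ n) ([:-1, 0, 1:] ^ n)) t =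
      (\<Sum>k\<le>n. if k \<le> n div 2 then c k * fact (2 * (n - k)) / fact (n - 2 * k) * t ^ (n - 2 * k) else 0)"
    unfolding expand higher_pderiv_sum poly_sum
  proof (intro sum.cong refl)
    fix k assume "k \<in> {..n}"
    then have "(n \<le> 2 * (n - k)) = (k \<le> n div 2)" "2 * (n - k) - n = n - 2 * k" by auto
    then show "poly ((pderiv ^^ n) (monom (c k) (2 * (n - k)))) t = (if k \<le> n div 2 then
        c k * fact (2 * (n - k)) / fact (n - 2 * k) * t ^ (n - 2 * k) else 0)"
      by (simp add: higher_pderiv_monom_fact poly_monom)
  qed
  also have "\<dots> = (\<Sum>k = 0..n div 2. c k * fact (2 * (n - k)) / fact (n - 2 * k) * t ^ (n - 2 * k))"
    by (subst sum.inter_filter[symmetric]) (auto intro!: sum.cong)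
  also have "\<dots> = fact n * 2 ^ n * LegendreP n t"
    unfolding LegendreP_def sum_distrib_left
  proof (intro sum.cong refl)
    fix k assume "k \<in> {0..n div 2}"
    then have "k \<le> n" "2 * n - 2 * k = 2 * (n - k)" by auto
    then show "c k * fact (2 * (n - k)) / fact (n - 2 * k) * t ^ (n - 2 * k) =
        fact n * 2 ^ n * (1 / 2 ^ n * ((-1) ^ k * fact (2 * n - 2 * k) /
          (fact k * fact (n - k) * fact (n - 2 * k)) * t ^ (n - 2 * k)))"
      unfolding c_def binomial_fact[OF \<open>k \<le> n\<close>] by (simp add: field_simps)
  qed
  finally show ?thesis .
qed

lemma poly_higher_pderiv_Rodrigues_shifted:
  fixes u :: "'a :: field_char_0"
  shows "poly ((pderiv ^^ n) ([:-1, 0, 1:] ^ n)) (1 + 2 * u) =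
    fact n * 2 ^ n * (\<Sum>j = 0..n. of_nat (n choose j) * of_nat ((n + j) choose j) * u ^ j)"
proof -
  define Q :: "'a poly" where "Q = (\<Sum>j\<le>n. monom (of_nat (n choose j)) (n + j))"
  \<comment> \<open>the substitution \<open>x = 1 + 2u\<close> turns \<open>x\<^sup>2 - 1\<close> into \<open>4u(u + 1)\<close>\<close>
  have shift: "[:-1, 0, 1:] ^ n \<circ>\<^sub>p [:1, 2:] = smult (4 ^ n) Q"
  proof (rule poly_eq_poly_eq_iff[THEN iffD1], rule ext)
    fix x :: 'a
    have "poly ([:-1, 0, 1:] ^ n \<circ>\<^sub>p [:1, 2:]) x = (4 * (x * (x + 1))) ^ n"
      by (simp add: poly_pcompose poly_power algebra_simps)
    also have "\<dots> = 4 ^ n * x ^ n * (x + 1) ^ n"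
      by (simp add: power_mult_distrib)
    also have "(x + 1) ^ n = (\<Sum>j\<le>n. of_nat (n choose j) * x ^ j * 1 ^ (n - j))"
      by (rule binomial_ring)
    finally show "poly ([:-1, 0, 1:] ^ n \<circ>\<^sub>p [:1, 2:]) x = poly (smult (4 ^ n) Q) x"
      by (simp add: Q_def poly_sum poly_monom sum_distrib_left power_add algebra_simps)
  qed
  have "2 ^ n * poly ((pderiv ^^ n) ([:-1, 0, 1:] ^ n)) (1 + 2 * u) =
      poly ((pderiv ^^ n) ([:-1, 0, 1:] ^ n \<circ>\<^sub>p [:1, 2:])) u"
    by (simp add: higher_pderiv_pcompose_linear poly_pcompose mult.commute)
  also have "\<dots> = 4 ^ n * (\<Sum>j\<le>n. of_nat (n choose j) * (fact (n + j) / fact j) * u ^ j)"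
    unfolding shift higher_pderiv_smult Q_def higher_pderiv_sum
    by (simp add: poly_sum higher_pderiv_monom_fact poly_monom)
  also have "\<dots> = 4 ^ n * fact n * (\<Sum>j = 0..n. of_nat (n choose j) * of_nat ((n + j) choose j) * u ^ j)"
    unfolding atLeast0AtMost sum_distrib_left mult.assoc
  proof (intro arg_cong[where f = "(*) (4 ^ n)"] sum.cong refl)
    fix j
    have "(of_nat ((n + j) choose j) :: 'a) = fact (n + j) / (fact j * fact n)"
      using binomial_fact[of j "n + j"] by simp
    then show "of_nat (n choose j) * (fact (n + j) / fact j * u ^ j) =
        fact n * (of_nat (n choose j) * (of_nat ((n + j) choose j) * u ^ j))"
      by (simp add: field_simps)
  qed
  also have "(4 :: 'a) ^ n = 2 ^ n * 2 ^ n"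
    by (simp flip: power_mult_distrib)
  finally show ?thesis
    by (simp add: mult.assoc)
qed

lemma LegendreP_eq_hypergeometric:
  "LegendreP n t = (\<Sum>j = 0..n. of_nat (n choose j) * of_nat ((n + j) choose j) * ((t - 1) / 2) ^ j)"
proof -
  have "1 + 2 * ((t - 1) / 2) = t" by (simp add: field_simps)
  then show ?thesis
    using poly_higher_pderiv_Rodrigues[of n t] poly_higher_pderiv_Rodrigues_shifted[of n "(t - 1) / 2"]
    by simp
qed

section \<open>Congruences modulo \<open>p = 2n + 1\<close>\<close>

lemma gbinomial_minus_half:
  "((-1/2 :: 'a :: field_char_0) gchoose k) = (-1/4) ^ k * of_nat ((2 * k) choose k)"
proof -
  have "(of_nat ((2 * k) choose k) :: 'a) = fact (2 * k) / (fact k * fact k)"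
    using binomial_fact[of k "2 * k"] by (simp add: mult_2)
  also have "\<dots> = 4 ^ k * pochhammer (1/2) k / fact k"
    by (simp add: fact_double power_mult)
  moreover have "(-1/4) ^ k * 4 ^ k = ((-1) ^ k :: 'a)"
    by (simp flip: power_mult_distrib)
  ultimately show ?thesis
    by (simp add: gbinomial_pochhammer mult.assoc[symmetric])
qed

lemma sum_homogeneous_dehomogenize:
  fixes a b :: "'a :: field"
  assumes "a \<noteq> 0"
  shows "(\<Sum>i = 0..n. c i * a ^ (n - i) * b ^ i) = a ^ n * (\<Sum>i = 0..n. c i * (b / a) ^ i)"
  unfolding sum_distrib_left
proof (intro sum.cong refl)
  fix i assume "i \<in> {0..n}"
  then have "a ^ n = a ^ (n - i) * a ^ i" by (simp flip: power_add)
  then show "c i * a ^ (n - i) * b ^ i = a ^ n * (c i * (b / a) ^ i)"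
    using assms by (simp add: power_divide)
qed

locale odd_prime =
  fixes p :: int and n :: nat
  assumes prime: "prime p" and p_eq: "p = 2 * int n + 1"
begin

sublocale Zp
  using prime by unfold_locales auto

lemma res_Zp_cong:
  assumes "in_Zp p q"
  shows "cong_Zp q (of_int (res_Zp p q)) p"
proof -
  have "p > 0" using prime prime_gt_0_int by blast
  obtain a b where qo: "quotient_of q = (a, b)" by fastforce
  have "b > 0" "q = of_int a / of_int b"
    using quotient_of_denom_pos[OF qo] quotient_of_div[OF qo] by auto
  have "coprime b p" using assms qo by (simp add: in_Zp_def)
  have "[b * res_Zp p q = a] (mod p)"
    using res_Zp_spec[OF \<open>p > 0\<close> assms] qo by simp
  then obtain k where k: "b * res_Zp p q - a = p * k"
    by (metis cong_iff_dvd_diff dvd_def)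
  have "of_int (res_Zp p q) - q = (of_int (b * res_Zp p q - a) :: rat) / of_int b"
    using \<open>b > 0\<close> \<open>q = _\<close> by (simp add: field_simps)
  also have "\<dots> = of_int p * (of_int k / of_int b)" unfolding k by simp
  finally have "cong_Zp (of_int (res_Zp p q)) q p"
    using \<open>b > 0\<close> \<open>coprime b p\<close> by (intro cong_ZpI[of "of_int k / of_int b"] in_Zp_fraction) auto
  then show ?thesis
    by (rule cong_Zp_sym)
qed

lemma in_Zp_half: "in_Zp p (1 / 2)"
proof -
  have "coprime 2 p"
    unfolding p_eq by (simp add: coprime_commute)
  then show ?thesis using in_Zp_inverse[of 2 p] by simp
qed

lemma half_cong_minus_half: "cong_Zp (of_nat n) (-1/2) p"
proof (rule cong_ZpI[OF in_Zp_half])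
  show "of_nat n - (-1/2) = of_int p * (1 / 2 :: rat)"
    by (simp add: p_eq field_simps)
qed

lemma binomial_half_cong:
  assumes "k \<le> n"
  shows "cong_Zp (of_nat (n choose k)) ((-1/4) ^ k * of_nat ((2 * k) choose k)) p"
proof -
  have "cong_Zp (of_nat n gchoose k) ((-1/2) gchoose k) p"
    using assms prime by (intro cong_Zp_gbinomial half_cong_minus_half) (auto simp: p_eq)
  then show ?thesis
    unfolding binomial_gbinomial[of n k] gbinomial_minus_half .
qed

lemma binomial_plus_half_cong:
  assumes "k \<le> n"
  shows "cong_Zp (of_nat ((n + k) choose k)) ((1/4) ^ k * of_nat ((2 * k) choose k)) p"
proof -
  have k: "int k < p" using assms by (simp add: p_eq)
  have "cong_Zp (- of_nat n - 1) (- (-1/2) - 1) p"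
    by (intro cong_Zp_diff cong_Zp_uminus half_cong_minus_half cong_Zp_refl)
  then have "cong_Zp ((- of_nat n - 1) gchoose k) ((-1/2) gchoose k) p"
    by (intro cong_Zp_gbinomial[OF prime _ _ k]) auto
  then have "cong_Zp ((-1) ^ k * ((- of_nat n - 1) gchoose k)) ((-1) ^ k * ((-1/2) gchoose k)) p"
    by (intro cong_Zp_mult cong_Zp_refl in_Zp_gbinomial prime k) auto
  moreover have "of_nat ((n + k) choose k) = (-1) ^ k * ((- of_nat n - 1) gchoose k :: rat)"
    unfolding binomial_gbinomial gbinomial_negated_upper[of "of_nat (n + k)"] by simp
  moreover have "(-1) ^ k * (-1/4) ^ k = ((1/4) ^ k :: rat)"
    by (simp flip: power_mult_distrib)
  ultimately show ?thesis
    by (simp only: gbinomial_minus_half mult.assoc[symmetric])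
qed

lemma binomial_square_cong:
  assumes "k \<le> n"
  shows "cong_Zp (of_nat (n choose k) ^ 2) ((1/16) ^ k * of_nat ((2 * k) choose k) ^ 2) p"
proof -
  have "cong_Zp (of_nat (n choose k) ^ 2) (((-1/4) ^ k * of_nat ((2 * k) choose k)) ^ 2) p"
    using prime by (intro cong_Zp_power binomial_half_cong assms) auto
  moreover have "((-1/4) ^ k * of_nat ((2 * k) choose k)) ^ 2 =
      (((-1/4) ^ 2) ^ k * of_nat ((2 * k) choose k) ^ 2 :: rat)"
    by (metis power_mult power_mult_distrib mult.commute)
  moreover have "(-1/4 :: rat) ^ 2 = 1/16"
    by (simp add: power2_eq_square)
  ultimately show ?thesis
    by (simp only:)
qed

lemma binomial_product_cong:
  assumes "k \<le> n"
  shows "cong_Zp (of_nat (n choose k) * of_nat ((n + k) choose k))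
    ((-1/16) ^ k * of_nat ((2 * k) choose k) ^ 2) p"
proof -
  have "cong_Zp (of_nat (n choose k) * of_nat ((n + k) choose k))
      ((-1/4) ^ k * of_nat ((2 * k) choose k) * ((1/4) ^ k * of_nat ((2 * k) choose k))) p"
    using prime by (intro cong_Zp_mult binomial_half_cong binomial_plus_half_cong assms) auto
  moreover have "(-1/4) ^ k * (1/4) ^ k = ((-1/16) ^ k :: rat)"
    by (simp flip: power_mult_distrib)
  ultimately show ?thesis
    by (simp add: power2_eq_square mult_ac)
qed

lemma Legendre_cong_power: "[Legendre a p = a ^ n] (mod p)"
proof -
  have p: "p = int (2 * n + 1)" using p_eq by simp
  then have "prime (2 * n + 1)"
    using prime prime_nat_int_transfer by metis
  moreover have "2 < 2 * n + 1"
    using prime_ge_2_int[OF prime] p_eq by presburger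
  ultimately have "[Legendre a (int (2 * n + 1)) = a ^ ((2 * n + 1 - 1) div 2)] (mod int (2 * n + 1))"
    by (rule euler_criterion)
  then show ?thesis
    unfolding p by simp
qed

lemma Legendre_Zp_cong_power:
  assumes "in_Zp p q"
  shows "cong_Zp (of_int (Legendre_Zp q p)) (q ^ n) p"
proof -
  have "cong_Zp (of_int (Legendre_Zp q p)) (of_int (res_Zp p q ^ n)) p"
    unfolding Legendre_Zp_def by (intro cong_Zp_of_int Legendre_cong_power)
  also have "cong_Zp (of_int (res_Zp p q ^ n)) (q ^ n) p"
    using res_Zp_cong[OF assms] by (auto intro: cong_Zp_power cong_Zp_sym)
  finally show ?thesis .
qed

lemma in_Zp_divide_2 [simp]: "in_Zp p x \<Longrightarrow> in_Zp p (x / 2)"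
  using in_Zp_mult[OF _ in_Zp_half, of x] by simp

lemma LegendreP_cong_central_binomial_sum:
  assumes "in_Zp p t"
  shows "cong_Zp (LegendreP n t) (\<Sum>k = 0..n. of_nat ((2 * k) choose k) ^ 2 * ((1 - t) / 32) ^ k) p"
  unfolding LegendreP_eq_hypergeometric
proof (intro cong_Zp_sum)
  fix k assume "k \<in> {0..n}"
  then have "cong_Zp (of_nat (n choose k) * of_nat ((n + k) choose k) * ((t - 1) / 2) ^ k)
      ((-1/16) ^ k * of_nat ((2 * k) choose k) ^ 2 * ((t - 1) / 2) ^ k) p"
    using assms by (intro cong_Zp_mult binomial_product_cong cong_Zp_refl) auto
  moreover have "(-1/16) * ((t - 1) / 2) = (1 - t) / 32"
    by (simp add: field_simps)
  then have "(-1/16) ^ k * ((t - 1) / 2) ^ k = ((1 - t) / 32) ^ k"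
    by (metis power_mult_distrib)
  then have "(-1/16) ^ k * of_nat ((2 * k) choose k) ^ 2 * ((t - 1) / 2) ^ k =
      of_nat ((2 * k) choose k) ^ 2 * ((1 - t) / 32) ^ k"
    by (metis mult.commute mult.left_commute)
  ultimately show "cong_Zp (of_nat (n choose k) * of_nat ((n + k) choose k) * ((t - 1) / 2) ^ k)
      (of_nat ((2 * k) choose k) ^ 2 * ((1 - t) / 32) ^ k) p"
    by (simp only:)
qed

lemma binomial_square_sum_cong:
  assumes "in_Zp p u"
  shows "cong_Zp (\<Sum>k = 0..n. of_nat (n choose k) ^ 2 * u ^ k)
    (\<Sum>k = 0..n. of_nat ((2 * k) choose k) ^ 2 * (u / 16) ^ k) p"
proof (intro cong_Zp_sum)
  fix k assume "k \<in> {0..n}"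
  then have "cong_Zp (of_nat (n choose k) ^ 2 * u ^ k)
      ((1/16) ^ k * of_nat ((2 * k) choose k) ^ 2 * u ^ k) p"
    using assms by (intro cong_Zp_mult binomial_square_cong cong_Zp_refl) auto
  then show "cong_Zp (of_nat (n choose k) ^ 2 * u ^ k) (of_nat ((2 * k) choose k) ^ 2 * (u / 16) ^ k) p"
    by (simp add: power_divide mult_ac)
qed

lemma sum_Legendre_Zp_cubic_cong:
  assumes "in_Zp p t"
  shows "cong_Zp (of_int (\<Sum>x = 0..p - 1.
      Legendre_Zp (of_int x ^ 3 - 3 * (t\<^sup>2 + 3) * of_int x + 2 * t * (t\<^sup>2 - 9)) p))
    (- ((-6) ^ n * (\<Sum>k = 0..n. of_nat (n choose k) ^ 2 * ((1 - t) / 2) ^ k))) p"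
proof -
  \<comment> \<open>replace \<open>t\<close> by its integer residue, so that the integer power-sum computation applies\<close>
  define r where "r = res_Zp p t"
  have t_r: "cong_Zp t (of_int r) p" using res_Zp_cong[OF assms] by (simp add: r_def)
  define f where "f x = of_int x ^ 3 - 3 * (t\<^sup>2 + 3) * of_int x + 2 * t * (t\<^sup>2 - 9)" for x :: int
  have f_factor: "f x = (of_int x - (t + 3)) * (of_int x - (t - 3)) * (of_int x - (- 2 * t))" for x
    by (simp add: f_def power2_eq_square power3_eq_cube algebra_simps)
  have "cong_Zp (of_int (\<Sum>x = 0..p - 1. Legendre_Zp (f x) p))
      (of_int (\<Sum>x = 0..p - 1. ((x - (r + 3)) * (x - (r - 3)) * (x - (- 2 * r))) ^ n)) p"
    unfolding of_int_sum
  proof (intro cong_Zp_sum)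
    fix x
    have "in_Zp p (f x)" using assms by (simp add: f_def)
    then have "cong_Zp (of_int (Legendre_Zp (f x) p)) (f x ^ n) p"
      by (rule Legendre_Zp_cong_power)
    also have "cong_Zp (f x ^ n)
        (((of_int x - (of_int r + 3)) * (of_int x - (of_int r - 3)) * (of_int x - (- 2 * of_int r))) ^ n) p"
      unfolding f_factor using assms
      by (intro cong_Zp_power cong_Zp_mult cong_Zp_diff cong_Zp_add cong_Zp_uminus t_r cong_Zp_refl) simp_all
    finally show "cong_Zp (of_int (Legendre_Zp (f x) p))
        (of_int (((x - (r + 3)) * (x - (r - 3)) * (x - (- 2 * r))) ^ n)) p"
      by simp
  qed
  also have "cong_Zp (of_int (\<Sum>x = 0..p - 1. ((x - (r + 3)) * (x - (r - 3)) * (x - (- 2 * r))) ^ n))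
      (- (\<Sum>k = 0..n. of_nat (n choose k) ^ 2 * (-6) ^ (n - k) * (3 * of_int r - 3) ^ k)) p"
    using cong_Zp_of_int[OF sum_split_cubic_power[OF prime p_eq, of "r + 3" "r - 3" "- 2 * r"]]
    by simp
  also have "cong_Zp (- (\<Sum>k = 0..n. of_nat (n choose k) ^ 2 * (-6) ^ (n - k) * (3 * of_int r - 3) ^ k))
      (- (\<Sum>k = 0..n. of_nat (n choose k) ^ 2 * (-6) ^ (n - k) * (3 * t - 3) ^ k)) p"
    using assms
    by (auto intro!: cong_Zp_uminus cong_Zp_sum cong_Zp_mult cong_Zp_power cong_Zp_diff cong_Zp_sym[OF t_r])
  also have "(\<Sum>k = 0..n. of_nat (n choose k) ^ 2 * (-6) ^ (n - k) * (3 * t - 3) ^ k) =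
      (-6) ^ n * (\<Sum>k = 0..n. of_nat (n choose k) ^ 2 * ((1 - t) / 2) ^ k)"
  proof -
    have base: "(3 * t - 3) / (-6) = (1 - t) / 2" by (simp add: field_simps)
    show ?thesis by (subst sum_homogeneous_dehomogenize) (simp, simp only: base)
  qed
  finally show ?thesis
    unfolding f_def .
qed

lemma minus_six_power_square_cong:
  assumes "p > 3"
  shows "[(-6) ^ n * (-6) ^ n = 1] (mod p)"
proof -
  have "\<not> p dvd 6"
  proof
    assume "p dvd 6"
    then have "p dvd 2 \<or> p dvd 3" using prime prime_dvd_mult_iff[of p 2 3] by simp
    then show False using assms zdvd_imp_le[of p 2] zdvd_imp_le[of p 3] by auto
  qed
  then have "coprime 6 p"
    using prime by (simp add: prime_imp_coprime coprime_commute)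
  moreover have "(-6 :: int) ^ n * (-6) ^ n = 6 ^ nat (p - 1)"
    by (simp add: p_eq nat_mult_distrib power_mult flip: power_mult_distrib)
  ultimately show ?thesis
    using fermat_theorem_int[OF prime] by simp
qed

lemma character_sum_cong_central_binomial_sum:
  assumes "p > 3" "in_Zp p t"
  shows "cong_Zp (- of_int (Legendre (-6) p * (\<Sum>x = 0..p - 1.
      Legendre_Zp (of_int x ^ 3 - 3 * (t\<^sup>2 + 3) * of_int x + 2 * t * (t\<^sup>2 - 9)) p)))
    (\<Sum>k = 0..n. of_nat ((2 * k) choose k) ^ 2 * ((1 - t) / 32) ^ k) p"
proof -
  define S where "S = (\<Sum>k = 0..n. of_nat (n choose k) ^ 2 * ((1 - t) / 2) ^ k)"
  have "cong_Zp (of_int (Legendre (-6) p)) ((-6) ^ n) p"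
    using cong_Zp_of_int[OF Legendre_cong_power[of "-6"]] by simp
  have "cong_Zp (- of_int (Legendre (-6) p * (\<Sum>x = 0..p - 1.
      Legendre_Zp (of_int x ^ 3 - 3 * (t\<^sup>2 + 3) * of_int x + 2 * t * (t\<^sup>2 - 9)) p)))
      (- ((-6) ^ n * (- ((-6) ^ n * S)))) p"
    unfolding of_int_mult S_def
    by (intro cong_Zp_uminus cong_Zp_mult \<open>cong_Zp (of_int (Legendre (-6) p)) _ p\<close>
        sum_Legendre_Zp_cubic_cong assms) simp_all
  also have "- ((-6) ^ n * (- ((-6) ^ n * S))) = of_int ((-6) ^ n * (-6) ^ n) * S"
    by simp
  also have "cong_Zp (of_int ((-6) ^ n * (-6) ^ n) * S) (1 * S) p"
    using assms cong_Zp_of_int[OF minus_six_power_square_cong[OF assms(1)]]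
    by (intro cong_Zp_mult cong_Zp_refl) (simp_all add: S_def)
  also have "cong_Zp (1 * S) (\<Sum>k = 0..n. of_nat ((2 * k) choose k) ^ 2 * ((1 - t) / 32) ^ k) p"
    using binomial_square_sum_cong[of "(1 - t) / 2"] assms by (simp add: S_def)
  finally show ?thesis .
qed

end

theorem theorem2p11:
  fixes p :: int and t :: rat
  assumes "prime p" and "p > 3" and "in_Zp p t"
  shows "cong_Zp (LegendreP (nat ((p - 1) div 2)) t)
           (\<Sum>k = 0..nat ((p - 1) div 2). of_nat ((2*k) choose k) ^ 2 * ((1 - t) / 32) ^ k) p
       \<and> cong_Zp (\<Sum>k = 0..nat ((p - 1) div 2). of_nat ((2*k) choose k) ^ 2 * ((1 - t) / 32) ^ k)
           (- of_int (Legendre (-6) p * (\<Sum>x = 0..p - 1.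
               Legendre_Zp (of_int x ^ 3 - 3 * (t^2 + 3) * of_int x + 2 * t * (t^2 - 9)) p))) p"
proof -
  have "odd p"
    using assms(1,2) prime_odd_int by simp
  then have "p = 2 * int (nat ((p - 1) div 2)) + 1"
    using assms(2) by (auto elim!: oddE)
  then interpret odd_prime p "nat ((p - 1) div 2)"
    using assms(1) by unfold_locales
  show ?thesis
    using LegendreP_cong_central_binomial_sum character_sum_cong_central_binomial_sum cong_Zp_sym assms
    by blast
qed

end
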